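(* Let $A = A_1 \oplus A_2 \in \mathbb{R}^{n\times n}$ be a block-diagonal direct sum, where $A_1$ and $A_2$ are irreducible nonnegative square matrices. For $t\in[0,1]$ let $r(t) := r\big((1-t)A + tA^{\top}\big)$, and for $k=1,2$ let $r_k(t) := r\big((1-t)A_k + tA_k^{\top}\big)$, where $r(\cdot)$ denotes spectral radius. Suppose there exists $t^*\in(0,1)$ such that (1) $r_1(t^* ) = r_2(t^* )$, and (2) $r_1'(t^* ) \neq r_2'(t^* )$. Then $r(t)$ is not concave in $t\in(0,1)$.
   Context: $r(M)$ denotes the spectral radius of a square matrix $M$. The direct sum $A_1\oplus A_2$ is the block-diagonal matrix with diagonal blocks $A_1, A_2$. *)

theory Defs
  imports "HOL-Analysis.Analysis" "Jordan_Normal_Form.Spectral_Radius"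
begin

definition nonneg_mat :: "real mat \<Rightarrow> bool" where
  "nonneg_mat A \<longleftrightarrow> (\<forall>i<dim_row A. \<forall>j<dim_col A. A $$ (i,j) \<ge> 0)"

text \<open>Irreducibility (Horn--Johnson convention): an n x n matrix with n \<ge> 1 is reducible
  if n = 1 and it is zero, or if n \<ge> 2 and it is permutation-similar to a block upper
  triangular matrix, i.e. there is a nonempty proper index set J with A(i,j) = 0 for all
  i in J and j not in J.\<close>
definition irreducible_mat :: "real mat \<Rightarrow> bool" where
  "irreducible_mat A \<longleftrightarrow>
     (let n = dim_row A in
       dim_col A = n \<and> n \<ge> 1 \<and>
       (n = 1 \<longrightarrow> A $$ (0,0) \<noteq> 0) \<and>
       (n \<ge> 2 \<longrightarrow> \<not> (\<exists>J. J \<noteq> {} \<and> J \<subset> {..<n} \<and>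
                         (\<forall>i\<in>J. \<forall>j\<in>{..<n} - J. A $$ (i,j) = 0))))"

definition spec_rad :: "real mat \<Rightarrow> real" where
  "spec_rad A = spectral_radius (map_mat complex_of_real A)"

definition sym_path :: "real mat \<Rightarrow> real \<Rightarrow> real mat" where
  "sym_path A t = (1 - t) \<cdot>\<^sub>m A + t \<cdot>\<^sub>m transpose_mat A"

end

theory Submission
  imports Defs
begin

text \<open>Since the path of A is the direct sum of the paths of A1 and A2, and the spectrum of a
  direct sum is the union of the spectra, r(t) = max (r1(t), r2(t)). At t* both branches
  touch r from below, so for small h the function h \<mapsto> r1(t* + h) + r2(t* - h) is bounded
  by r(t* + h) + r(t* - h), which concavity bounds by 2 r(t*), its value at h = 0. This
  interior maximum forces its derivative r1'(t*) - r2'(t*) to vanish.\<close>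

lemma concave_on_midpoint:
  fixes f :: "real \<Rightarrow> real"
  assumes "concave_on S f" and "x - h \<in> S" and "x + h \<in> S"
  shows "f (x + h) + f (x - h) \<le> 2 * f x"
proof -
  have "- f ((1 - 1/2) *\<^sub>R (x + h) + (1/2) *\<^sub>R (x - h)) \<le> (1 - 1/2) * - f (x + h) + (1/2) * - f (x - h)"
    using assms by (intro convex_onD[of S "\<lambda>y. - f y"]) (auto simp: concave_on_def)
  moreover have "(1 - 1/2) *\<^sub>R (x + h) + (1/2) *\<^sub>R (x - h) = x"
    by (simp add: field_simps)
  ultimately show ?thesis by simp
qed

lemma concave_on_touching_derivatives_eq:
  fixes f g1 g2 :: "real \<Rightarrow> real"
  assumes conc: "concave_on S f" and x: "x \<in> interior S"
    and below: "\<And>y. y \<in> S \<Longrightarrow> g1 y \<le> f y" "\<And>y. y \<in> S \<Longrightarrow> g2 y \<le> f y"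
    and touch: "g1 x = f x" "g2 x = f x"
    and deriv: "(g1 has_real_derivative d1) (at x)" "(g2 has_real_derivative d2) (at x)"
  shows "d1 = d2"
proof -
  define \<phi> where "\<phi> h = g1 (x + h) + g2 (x - h)" for h
  have deriv_\<phi>: "(\<phi> has_real_derivative d1 - d2) (at 0)"
  proof -
    have "((\<lambda>h. g1 (x + h)) has_real_derivative d1) (at 0)"
      using DERIV_shift[of g1 d1 0 x] deriv(1) by (simp add: add.commute)
    moreover have "((\<lambda>h. g2 (x - h)) has_real_derivative - d2) (at 0)"
      using DERIV_mirror[of "\<lambda>h. g2 (h + x)" d2 0] DERIV_shift[of g2 d2 0 x] deriv(2)
      by (simp add: add.commute)
    ultimately show ?thesis
      unfolding \<phi>_def by (auto intro!: derivative_eq_intros)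
  qed
  obtain e where "e > 0" and ball: "ball x e \<subseteq> S"
    using x mem_interior by blast
  have max_\<phi>: "\<phi> h \<le> \<phi> 0" if "\<bar>0 - h\<bar> < e" for h
  proof -
    have "x + h \<in> S" "x - h \<in> S"
      using that ball by (auto simp: dist_real_def)
    then have "\<phi> h \<le> f (x + h) + f (x - h)"
      unfolding \<phi>_def using below by (intro add_mono) auto
    also have "\<dots> \<le> 2 * f x"
      using concave_on_midpoint[OF conc] \<open>x + h \<in> S\<close> \<open>x - h \<in> S\<close> by blast
    also have "\<dots> = \<phi> 0"
      unfolding \<phi>_def using touch by simp
    finally show ?thesis .
  qed
  have "d1 - d2 = 0"
    using DERIV_local_max[OF deriv_\<phi> \<open>e > 0\<close>] max_\<phi> by blast
  then show ?thesis by simp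
qed

lemma char_poly_four_block_diag:
  fixes B1 B2 :: "'a :: field mat"
  assumes B1: "B1 \<in> carrier_mat n1 n1" and B2: "B2 \<in> carrier_mat n2 n2"
  shows "char_poly (four_block_mat B1 (0\<^sub>m n1 n2) (0\<^sub>m n2 n1) B2) = char_poly B1 * char_poly B2"
proof -
  let ?cm = "\<lambda>A. [:0, 1:] \<cdot>\<^sub>m 1\<^sub>m (dim_row A) + map_mat (\<lambda>a. [:- a:]) A"
  let ?B = "four_block_mat B1 (0\<^sub>m n1 n2) (0\<^sub>m n2 n1) B2"
  have "char_poly ?B = det (?cm ?B)"
    unfolding char_poly_defs using B1 B2 by simp
  also have "?cm ?B = four_block_mat (?cm B1) (0\<^sub>m n1 n2) (0\<^sub>m n2 n1) (?cm B2)"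
    by (rule eq_matI) (use B1 B2 in \<open>auto simp: one_poly_def\<close>)
  also have "det \<dots> = det (?cm B1) * det (?cm B2)"
    by (rule det_four_block_mat_upper_right_zero) (use B1 B2 in auto)
  also have "\<dots> = char_poly B1 * char_poly B2"
    unfolding char_poly_defs ..
  finally show ?thesis .
qed

lemma spectrum_four_block_diag:
  fixes B1 B2 :: "'a :: field mat"
  assumes B1: "B1 \<in> carrier_mat n1 n1" and B2: "B2 \<in> carrier_mat n2 n2"
  shows "spectrum (four_block_mat B1 (0\<^sub>m n1 n2) (0\<^sub>m n2 n1) B2) = spectrum B1 \<union> spectrum B2"
proof -
  have B: "four_block_mat B1 (0\<^sub>m n1 n2) (0\<^sub>m n2 n1) B2 \<in> carrier_mat (n1 + n2) (n1 + n2)"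
    using B1 B2 by auto
  show ?thesis
    unfolding spectrum_root_char_poly[OF B1] spectrum_root_char_poly[OF B2]
      spectrum_root_char_poly[OF B] char_poly_four_block_diag[OF B1 B2]
    by (auto simp: poly_mult)
qed

lemma spectral_radius_four_block_diag:
  fixes B1 B2 :: "complex mat"
  assumes B1: "B1 \<in> carrier_mat n1 n1" and B2: "B2 \<in> carrier_mat n2 n2"
    and "n1 > 0" and "n2 > 0"
  shows "spectral_radius (four_block_mat B1 (0\<^sub>m n1 n2) (0\<^sub>m n2 n1) B2)
     = max (spectral_radius B1) (spectral_radius B2)"
  unfolding spectral_radius_def spectrum_four_block_diag[OF B1 B2] image_Un
  using card_finite_spectrum(1)[OF B1] card_finite_spectrum(1)[OF B2]
    spectrum_non_empty[OF B1] spectrum_non_empty[OF B2] assms(3,4)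
  by (intro Max_Un) auto

lemma spec_rad_four_block_diag:
  assumes B1: "B1 \<in> carrier_mat n1 n1" and B2: "B2 \<in> carrier_mat n2 n2"
    and "n1 > 0" and "n2 > 0"
  shows "spec_rad (four_block_mat B1 (0\<^sub>m n1 n2) (0\<^sub>m n2 n1) B2) = max (spec_rad B1) (spec_rad B2)"
proof -
  have map_zero: "map_mat complex_of_real (0\<^sub>m n m) = 0\<^sub>m n m" for n m
    by auto
  show ?thesis
    unfolding spec_rad_def map_four_block_mat[OF B1 zero_carrier_mat zero_carrier_mat B2] map_zero
    using assms by (intro spectral_radius_four_block_diag) auto
qed

lemma sym_path_four_block_diag:
  assumes "B1 \<in> carrier_mat n1 n1" and "B2 \<in> carrier_mat n2 n2"
  shows "sym_path (four_block_mat B1 (0\<^sub>m n1 n2) (0\<^sub>m n2 n1) B2) t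
     = four_block_mat (sym_path B1 t) (0\<^sub>m n1 n2) (0\<^sub>m n2 n1) (sym_path B2 t)"
  by (rule eq_matI) (use assms in \<open>auto simp: sym_path_def\<close>)

lemma sym_path_carrier_mat: "B \<in> carrier_mat n n \<Longrightarrow> sym_path B t \<in> carrier_mat n n"
  by (simp add: sym_path_def)

lemma irreducible_mat_dim_pos: "irreducible_mat B \<Longrightarrow> dim_row B > 0"
  by (simp add: irreducible_mat_def Let_def)

theorem proposition1:
  fixes A1 A2 A :: "real mat" and n1 n2 :: nat and ts d1 d2 :: real
  assumes "A1 \<in> carrier_mat n1 n1" and "A2 \<in> carrier_mat n2 n2"
    and "nonneg_mat A1" and "nonneg_mat A2"
    and "irreducible_mat A1" and "irreducible_mat A2"
    and "A = four_block_mat A1 (0\<^sub>m n1 n2) (0\<^sub>m n2 n1) A2"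
    and "0 < ts" and "ts < 1"
    and "spec_rad (sym_path A1 ts) = spec_rad (sym_path A2 ts)"
    and "((\<lambda>t. spec_rad (sym_path A1 t)) has_real_derivative d1) (at ts)"
    and "((\<lambda>t. spec_rad (sym_path A2 t)) has_real_derivative d2) (at ts)"
    and "d1 \<noteq> d2"
  shows "\<not> concave_on {0<..<1} (\<lambda>t. spec_rad (sym_path A t))"
proof
  assume concave: "concave_on {0<..<1} (\<lambda>t. spec_rad (sym_path A t))"
  have "n1 > 0" "n2 > 0"
    using assms(1,2,5,6) irreducible_mat_dim_pos by auto
  then have max: "spec_rad (sym_path A t) = max (spec_rad (sym_path A1 t)) (spec_rad (sym_path A2 t))" for t
    unfolding assms(7) sym_path_four_block_diag[OF assms(1,2)]
    using spec_rad_four_block_diag sym_path_carrier_mat assms(1,2) by blast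
  have "d1 = d2"
  proof (rule concave_on_touching_derivatives_eq[OF concave])
    show "ts \<in> interior {0<..<1}"
      using assms(8,9) by simp
  qed (use assms(10-12) max in auto)
  with assms(13) show False ..
qed

end
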